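(* There exist constants $0<c_1\le c_2$ such that for every $\Delta>0$ there is a probability density $f_\Delta$ on $\mathbb R$ such that a random variable $T$ with density $f_\Delta$ satisfies: $c_1/\Delta\le\langle|T|\rangle\le c_2/\Delta$ (i.e. $\langle|T|\rangle=\Theta(1/\Delta)$); its characteristic function $\Phi(\omega)=\mathbb E[e^{i\omega T}]$ vanishes for all $|\omega|\ge\Delta$; and all its central moments are finite, $\langle (T-\langle T\rangle)^n\rangle<\infty$ for all $n\ge 0$.
   Context: $\langle\cdot\rangle$ denotes expectation. *)

theory Defs
  imports "HOL-Probability.Probability"
begin

end

theory Submission
  imports Defs "HOL-Real_Asymp.Real_Asymp"
begin

text \<open>The density is a rescaled, normalised copy of
  \<open>\<psi>(x) = \<Prod>\<^sub>i\<^sub>,\<^sub>j cos\<^sup>2 (x / 2^(i+j+4))\<close>.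
  Each factor \<open>cos\<^sup>2 (c x)\<close> has Fourier support \<open>{-2c, 0, 2c}\<close>, and the frequencies
  \<open>2 / 2^(i+j+4)\<close> sum to \<open>1/2\<close>, so the Fourier transform of \<open>\<psi>\<close> vanishes outside
  \<open>[-1/2, 1/2]\<close>; this is made rigorous by damping with Gaussians \<open>exp (-e x\<^sup>2)\<close>, whose
  transforms are explicit, and letting \<open>e \<rightarrow> 0\<close>. Grouping the factors by \<open>j\<close> and using
  Viete's formula \<open>\<Prod>\<^sub>i cos (y / 2^(i+1)) = sin y / y\<close> shows
  \<open>\<psi>(x) \<le> C\<^sub>J / x^(2J)\<close> for every \<open>J\<close>, so all moments are finite, while \<open>\<psi> \<ge> 1/2\<close>
  on \<open>[-1, 1]\<close> keeps the first absolute moment positive. Scaling by \<open>\<Delta>\<close> moves the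
  spectrum into \<open>[-\<Delta>/2, \<Delta>/2]\<close> and divides the first absolute moment by \<open>\<Delta>\<close>.\<close>

section \<open>Gaussian-damped Fourier transforms\<close>

lemma integrable_exp_neg_square:
  assumes e: "(e::real) > 0"
  shows "integrable lborel (\<lambda>x. exp (- e * x^2))"
proof -
  define c where "c = sqrt (2*e)"
  have c: "c > 0" using e by (simp add: c_def)
  have "integrable lborel (\<lambda>x. std_normal_density (0 + c * x))"
    by (rule lborel_integrable_real_affine[OF integrable_normal_density]) (use c in auto)
  then have "integrable lborel (\<lambda>x. sqrt (2*pi) * std_normal_density (0 + c * x))"
    by (rule integrable_mult_right)
  moreover have "(\<lambda>x. sqrt (2*pi) * std_normal_density (0 + c * x)) = (\<lambda>x. exp (- e * x^2))"
    using e by (simp add: std_normal_density_def c_def power_mult_distrib)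
  ultimately show ?thesis by (simp only:)
qed

definition gaussian_hat :: "real \<Rightarrow> real \<Rightarrow> real" where
  "gaussian_hat e w = sqrt (pi / e) * exp (- (w^2) / (4*e))"

lemma fourier_exp_neg_square:
  assumes e: "(e::real) > 0"
  shows "(CLINT x|lborel. exp (- e * x^2) *\<^sub>R iexp (w * x)) = complex_of_real (gaussian_hat e w)"
proof -
  define c where "c = sqrt (2*e)"
  have c: "c > 0" using e by (simp add: c_def)
  have "char std_normal_distribution (w / c) = complex_of_real (exp (- ((w/c)^2) / 2))"
    by (simp add: char_std_normal_distribution)
  moreover have "(w/c)^2 / 2 = w^2 / (4*e)" using e by (simp add: c_def power_divide)
  ultimately have char_wc: "char std_normal_distribution (w / c) = complex_of_real (exp (- (w^2) / (4*e)))"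
    by simp
  have "char std_normal_distribution (w / c) = (CLINT x|lborel. std_normal_density x *\<^sub>R iexp ((w/c) * x))"
    unfolding char_def by (subst integral_density) auto
  also have "\<dots> = c *\<^sub>R (CLINT x|lborel. std_normal_density (0 + c * x) *\<^sub>R iexp ((w/c) * (0 + c * x)))"
    using lborel_integral_real_affine[of c "\<lambda>x. std_normal_density x *\<^sub>R iexp ((w/c) * x)" 0] c by simp
  also have "\<dots> = c *\<^sub>R (CLINT x|lborel. (1 / sqrt (2 * pi)) *\<^sub>R (exp (- e * x^2) *\<^sub>R iexp (w * x)))"
    using c e by (simp add: std_normal_density_def c_def power_mult_distrib)
  also have "\<dots> = (c / sqrt (2*pi)) *\<^sub>R (CLINT x|lborel. exp (- e * x^2) *\<^sub>R iexp (w * x))"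
    by (subst integral_scaleR_right) simp
  finally have "(CLINT x|lborel. exp (- e * x^2) *\<^sub>R iexp (w * x))
      = (sqrt (2*pi) / c) *\<^sub>R complex_of_real (exp (- (w^2) / (4*e)))"
    using char_wc c by (simp add: field_simps)
  also have "sqrt (2*pi) / c = sqrt (pi / e)" using e by (simp add: c_def real_sqrt_divide[symmetric])
  finally show ?thesis by (simp add: scaleR_conv_of_real gaussian_hat_def)
qed

lemma gaussian_hat_antimono:
  assumes "e > 0" "0 \<le> d1" "d1 \<le> d2"
  shows "gaussian_hat e d2 \<le> gaussian_hat e d1"
proof -
  have "d1^2 \<le> d2^2" using assms by (simp add: power_mono)
  then have "- (d2^2) / (4*e) \<le> - (d1^2) / (4*e)" using assms by (simp add: divide_right_mono)
  then show ?thesis unfolding gaussian_hat_def using assms(1) by (intro mult_left_mono) auto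
qed

lemma gaussian_hat_tendsto_0:
  assumes "d > 0"
  shows "(\<lambda>m. gaussian_hat (1 / real (Suc m)) d) \<longlonglongrightarrow> 0"
  unfolding gaussian_hat_def using assms by real_asymp

text \<open>The Gaussian factor makes the Fourier integral of any bounded \<open>h\<close> converge, in particular
  that of a finite product of cosines, which is not integrable itself.\<close>

definition damped_fourier :: "real \<Rightarrow> (real \<Rightarrow> real) \<Rightarrow> real \<Rightarrow> complex" where
  "damped_fourier e h w = (CLINT x|lborel. (h x * exp (- e * x^2)) *\<^sub>R iexp (w * x))"

lemma integrable_damped_fourier:
  assumes e: "e > 0" and h: "h \<in> borel_measurable borel" and h_le: "\<And>x. \<bar>h x\<bar> \<le> 1"
  shows "integrable lborel (\<lambda>x. (h x * exp (- e * x^2)) *\<^sub>R iexp (w * x))"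
proof (rule Bochner_Integration.integrable_bound[OF integrable_exp_neg_square[OF e]])
  show "(\<lambda>x. (h x * exp (- e * x^2)) *\<^sub>R iexp (w * x)) \<in> borel_measurable lborel"
    using h by measurable
  show "AE x in lborel. norm ((h x * exp (- e * x^2)) *\<^sub>R iexp (w * x)) \<le> norm (exp (- e * x^2))"
    using h_le by (intro AE_I2) (simp add: abs_mult norm_exp_i_times mult_left_le_one_le)
qed

lemma damped_fourier_cos_mult:
  assumes e: "e > 0" and h: "h \<in> borel_measurable borel" and h_le: "\<And>x. \<bar>h x\<bar> \<le> 1"
  shows "damped_fourier e (\<lambda>x. cos (a * x) * h x) w
    = (damped_fourier e h (w + a) + damped_fourier e h (w - a)) / 2"
proof -
  have split: "(cos (a * x) * h x * exp (- e * x^2)) *\<^sub>R iexp (w * x) =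
     ((h x * exp (- e * x^2)) *\<^sub>R iexp ((w + a) * x) + (h x * exp (- e * x^2)) *\<^sub>R iexp ((w - a) * x)) / 2"
    for x
  proof -
    have "complex_of_real (cos (a*x)) = (iexp (a*x) + iexp (-(a*x))) / 2"
      by (simp add: cos_of_real[symmetric] cos_exp_eq)
    then have "(cos (a * x) * h x * exp (- e * x^2)) *\<^sub>R iexp (w * x) =
       ((iexp (a*x) + iexp (-(a*x))) / 2) * complex_of_real (h x * exp (- e * x^2)) * iexp (w * x)"
      by (simp add: scaleR_conv_of_real)
    also have "\<dots> = (complex_of_real (h x * exp (- e * x^2)) * (iexp (a*x) * iexp (w * x))
         + complex_of_real (h x * exp (- e * x^2)) * (iexp (-(a*x)) * iexp (w * x))) / 2"
      by (simp add: algebra_simps)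
    also have "iexp (a*x) * iexp (w * x) = iexp ((w + a) * x)"
      by (simp add: exp_add[symmetric] algebra_simps)
    also have "iexp (-(a*x)) * iexp (w * x) = iexp ((w - a) * x)"
      by (simp add: exp_add[symmetric] algebra_simps)
    finally show ?thesis by (simp add: scaleR_conv_of_real)
  qed
  show ?thesis
    unfolding damped_fourier_def split
    using integrable_damped_fourier[OF e h h_le, of "w + a"] integrable_damped_fourier[OF e h h_le, of "w - a"]
    by (simp add: integral_add)
qed

lemma norm_damped_fourier_cos_prod_le:
  assumes e: "e > 0" and "finite I" and w: "(\<Sum>k\<in>I. \<bar>c k\<bar>) \<le> \<bar>w\<bar>"
  shows "norm (damped_fourier e (\<lambda>x. \<Prod>k\<in>I. cos (c k * x)) w) \<le> gaussian_hat e (\<bar>w\<bar> - (\<Sum>k\<in>I. \<bar>c k\<bar>))"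
  using \<open>finite I\<close> w
proof (induction I arbitrary: w rule: finite_induct)
  case empty
  then show ?case
    using fourier_exp_neg_square[OF e, of w] e by (simp add: damped_fourier_def gaussian_hat_def norm_mult)
next
  case (insert k I)
  let ?S = "\<Sum>k\<in>I. \<bar>c k\<bar>"
  let ?h = "\<lambda>x. \<Prod>k\<in>I. cos (c k * x)"
  have sum_insert: "(\<Sum>k\<in>insert k I. \<bar>c k\<bar>) = \<bar>c k\<bar> + ?S" using insert by simp
  have shifted: "norm (damped_fourier e ?h (w + s)) \<le> gaussian_hat e (\<bar>w\<bar> - (\<bar>c k\<bar> + ?S))"
    if s: "\<bar>s\<bar> = \<bar>c k\<bar>" for s
  proof -
    have ws: "?S \<le> \<bar>w + s\<bar>" "\<bar>w\<bar> - (\<bar>c k\<bar> + ?S) \<le> \<bar>w + s\<bar> - ?S"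
      using insert.prems sum_insert s by linarith+
    have "norm (damped_fourier e ?h (w + s)) \<le> gaussian_hat e (\<bar>w + s\<bar> - ?S)"
      using insert.IH ws(1) by blast
    also have "\<dots> \<le> gaussian_hat e (\<bar>w\<bar> - (\<bar>c k\<bar> + ?S))"
      using ws insert.prems sum_insert by (intro gaussian_hat_antimono[OF e]) linarith+
    finally show ?thesis .
  qed
  have "damped_fourier e (\<lambda>x. \<Prod>k\<in>insert k I. cos (c k * x)) w
      = (damped_fourier e ?h (w + c k) + damped_fourier e ?h (w + - c k)) / 2"
    using insert damped_fourier_cos_mult[OF e, of ?h "c k" w] by (simp add: abs_prod prod_le_1)
  also have "norm \<dots> \<le> (norm (damped_fourier e ?h (w + c k)) + norm (damped_fourier e ?h (w + - c k))) / 2"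
    by (simp add: norm_triangle_ineq)
  also have "\<dots> \<le> gaussian_hat e (\<bar>w\<bar> - (\<Sum>k\<in>insert k I. \<bar>c k\<bar>))"
    using shifted[of "c k"] shifted[of "- c k"] sum_insert by simp
  finally show ?case .
qed

section \<open>Trigonometric and product inequalities\<close>

lemma cos_ge_1_minus_square_half: "1 - t^2/2 \<le> cos (t::real)"
proof -
  have "cos t = 1 - 2 * sin (t/2) ^ 2" using cos_double_sin[of "t/2"] by simp
  moreover have "sin (t/2) ^ 2 \<le> (t/2)^2"
    using abs_sin_x_le_abs_x[of "t/2"] by (metis abs_ge_zero power2_abs power_mono)
  ultimately show ?thesis by (simp add: power_divide)
qed

lemma cos_ge_1_minus_abs:
  assumes "\<bar>t\<bar> \<le> 1"
  shows "1 - \<bar>t\<bar> \<le> cos (t::real)"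
proof -
  have "t^2 = \<bar>t\<bar> * \<bar>t\<bar>" by (simp add: power2_eq_square)
  also have "\<dots> \<le> \<bar>t\<bar> * 1" using assms by (intro mult_left_mono) auto
  finally show ?thesis using cos_ge_1_minus_square_half[of t] by linarith
qed

lemma sin_ge_half:
  assumes "0 \<le> t" "t \<le> (1::real)"
  shows "t/2 \<le> sin t"
proof -
  have "(\<lambda>t. sin t - t/2) 0 \<le> (\<lambda>t. sin t - t/2) t"
  proof (rule DERIV_nonneg_imp_nondecreasing[OF assms(1)])
    fix x assume "0 \<le> x" "x \<le> t"
    then have "x^2 \<le> 1" using assms by (simp add: power_le_one)
    then have "0 \<le> cos x - 1/2" using cos_ge_1_minus_square_half[of x] by linarith
    moreover have "((\<lambda>t. sin t - t/2) has_real_derivative (cos x - 1/2)) (at x)"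
      by (auto intro!: derivative_eq_intros)
    ultimately show "\<exists>y. ((\<lambda>t. sin t - t/2) has_real_derivative y) (at x) \<and> 0 \<le> y" by blast
  qed
  then show ?thesis by simp
qed

lemma abs_sin_ge_half:
  assumes "\<bar>t\<bar> \<le> (1::real)"
  shows "\<bar>t\<bar>/2 \<le> \<bar>sin t\<bar>"
  using sin_ge_half[of t] sin_ge_half[of "-t"] assms by (cases "t \<ge> 0") auto

definition half_angle_cos_prod :: "nat \<Rightarrow> real \<Rightarrow> real" where
  "half_angle_cos_prod n y = (\<Prod>i<n. cos (y / 2^(i+1)))"

lemma sin_eq_half_angle_cos_prod: "sin y = 2^n * sin (y / 2^n) * half_angle_cos_prod n y"
proof (induction n)
  case (Suc n)
  have "sin (y / 2^n) = 2 * sin (y / 2^(n+1)) * cos (y / 2^(n+1))"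
    using sin_double[of "y / 2^(n+1)"] by simp
  then show ?case using Suc by (simp add: half_angle_cos_prod_def algebra_simps)
qed (simp add: half_angle_cos_prod_def)

lemma abs_half_angle_cos_prod_le:
  assumes "y \<noteq> 0" "\<bar>y\<bar> \<le> 2^n"
  shows "\<bar>half_angle_cos_prod n y\<bar> \<le> 2 / \<bar>y\<bar>"
proof -
  have "\<bar>y / 2^n\<bar> \<le> 1" using assms by (simp add: divide_le_eq_1)
  then have "\<bar>y\<bar> / 2 \<le> 2^n * \<bar>sin (y / 2^n)\<bar>"
    using abs_sin_ge_half[of "y / 2^n"] by (simp add: field_simps)
  then have "\<bar>y\<bar> / 2 * \<bar>half_angle_cos_prod n y\<bar> \<le> 2^n * \<bar>sin (y / 2^n)\<bar> * \<bar>half_angle_cos_prod n y\<bar>"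
    by (rule mult_right_mono) auto
  also have "\<dots> = \<bar>sin y\<bar>" by (subst sin_eq_half_angle_cos_prod[of y n]) (simp add: abs_mult)
  also have "\<dots> \<le> 1" by simp
  finally show ?thesis using assms by (simp add: field_simps)
qed

lemma prod_le_prod_subset:
  fixes f :: "'a \<Rightarrow> real"
  assumes "finite B" "A \<subseteq> B" "\<And>k. k \<in> B \<Longrightarrow> 0 \<le> f k \<and> f k \<le> 1"
  shows "prod f B \<le> prod f A"
proof -
  have "prod f B = prod f A * prod f (B - A)"
    using prod.subset_diff[OF assms(2,1)] by (simp add: mult.commute)
  moreover have "prod f (B - A) \<le> 1" using assms by (intro prod_le_1) auto
  moreover have "0 \<le> prod f A" using assms by (intro prod_nonneg) auto
  ultimately show ?thesis by (simp add: mult_left_le)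
qed

lemma one_minus_sum_le_prod:
  fixes u :: "'a \<Rightarrow> real"
  assumes "finite I" "\<And>k. k \<in> I \<Longrightarrow> 0 \<le> u k \<and> u k \<le> 1"
  shows "1 - sum u I \<le> (\<Prod>k\<in>I. 1 - u k)"
  using assms
proof (induction I rule: finite_induct)
  case (insert k I)
  have u: "0 \<le> u k" "u k \<le> 1" "0 \<le> sum u I" using insert by (auto intro: sum_nonneg)
  have "1 - sum u (insert k I) \<le> (1 - u k) * (1 - sum u I)"
    using insert u by (simp add: algebra_simps)
  also have "\<dots> \<le> (1 - u k) * (\<Prod>k\<in>I. 1 - u k)" using insert u by (intro mult_left_mono) auto
  finally show ?case using insert by simp
qed simp

section \<open>The function \<open>psi\<close>\<close>

definition freq :: "nat \<times> nat \<Rightarrow> real" where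
  "freq p = 1 / 2^(fst p + snd p + 4)"

definition psi_trunc :: "nat \<Rightarrow> real \<Rightarrow> real" where
  "psi_trunc N x = (\<Prod>p\<in>{..<N}\<times>{..<N}. cos (freq p * x) ^ 2)"

definition psi :: "real \<Rightarrow> real" where
  "psi x = lim (\<lambda>N. psi_trunc N x)"

lemma psi_trunc_eq_cos_prod:
  "psi_trunc N x = (\<Prod>k\<in>({..<N}\<times>{..<N})\<times>{..<2::nat}. cos (freq (fst k) * x))"
proof -
  have "(\<Prod>k\<in>({..<N}\<times>{..<N})\<times>{..<2::nat}. cos (freq (fst k) * x))
      = (\<Prod>p\<in>{..<N}\<times>{..<N}. \<Prod>b\<in>{..<2::nat}. cos (freq p * x))"
    by (subst prod.cartesian_product) (simp add: case_prod_unfold)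
  then show ?thesis
    unfolding psi_trunc_def by (simp add: numeral_2_eq_2 lessThan_Suc power2_eq_square)
qed

lemma sum_freq_le: "(\<Sum>k\<in>({..<N}\<times>{..<N})\<times>{..<2::nat}. \<bar>freq (fst k)\<bar>) \<le> 1/2"
proof -
  have "(\<Sum>i<N. (1/2::real)^i) = 2 - 2 * (1/2)^N"
    by (induction N) (simp_all add: field_simps)
  then have geometric: "(\<Sum>i<N. (1/2::real)^i) \<le> 2" by simp
  have "(\<Sum>k\<in>({..<N}\<times>{..<N})\<times>{..<2::nat}. \<bar>freq (fst k)\<bar>)
      = (\<Sum>p\<in>{..<N}\<times>{..<N}. \<Sum>b\<in>{..<2::nat}. \<bar>freq p\<bar>)"
    by (subst sum.cartesian_product) (simp add: case_prod_unfold)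
  also have "\<dots> = 2 * (\<Sum>p\<in>{..<N}\<times>{..<N}. freq p)"
    by (simp add: freq_def sum_distrib_left)
  also have "(\<Sum>p\<in>{..<N}\<times>{..<N}. freq p) = (\<Sum>j<N. \<Sum>i<N. (1/2)^j * (1/2)^i / 16)"
    by (subst sum.cartesian_product) (simp add: freq_def case_prod_unfold power_add power_divide)
  also have "\<dots> = (\<Sum>j<N. (1/2::real)^j) * (\<Sum>i<N. (1/2)^i) / 16"
    by (simp add: sum_product sum_divide_distrib)
  also have "\<dots> \<le> 2 * 2 / 16"
    using geometric by (intro divide_right_mono mult_mono) (auto intro: sum_nonneg)
  finally show ?thesis by simp
qed

lemma psi_trunc_nonneg: "0 \<le> psi_trunc N x"
  unfolding psi_trunc_def by (intro prod_nonneg) auto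

lemma psi_trunc_le_1: "psi_trunc N x \<le> 1"
  unfolding psi_trunc_def by (intro prod_le_1) (auto simp: abs_square_le_1)

lemma decseq_psi_trunc: "decseq (\<lambda>N. psi_trunc N x)"
  unfolding psi_trunc_def
  by (rule decseq_SucI, rule prod_le_prod_subset) (auto simp: abs_square_le_1)

lemma psi_trunc_tendsto: "(\<lambda>N. psi_trunc N x) \<longlonglongrightarrow> psi x"
  and psi_le_psi_trunc: "psi x \<le> psi_trunc N x"
proof -
  obtain L where L: "(\<lambda>N. psi_trunc N x) \<longlonglongrightarrow> L" "\<forall>i. L \<le> psi_trunc i x"
    using decseq_convergent[OF decseq_psi_trunc[of x], of 0] psi_trunc_nonneg by blast
  then have "psi x = L" unfolding psi_def by (simp add: limI)
  with L show "(\<lambda>N. psi_trunc N x) \<longlonglongrightarrow> psi x" "psi x \<le> psi_trunc N x" by auto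
qed

lemma psi_nonneg: "0 \<le> psi x"
  using psi_trunc_tendsto[of x] psi_trunc_nonneg by (intro LIMSEQ_le_const) auto

lemma psi_le_1: "psi x \<le> 1"
  using psi_le_psi_trunc[of x 0] psi_trunc_le_1[of 0 x] by simp

lemma borel_measurable_psi [measurable]: "psi \<in> borel_measurable borel"
  by (rule borel_measurable_LIMSEQ_real[OF psi_trunc_tendsto]) (simp add: psi_trunc_def)

lemma psi_trunc_ge_half:
  assumes x: "\<bar>x\<bar> \<le> 1"
  shows "1/2 \<le> psi_trunc N x"
proof -
  let ?I = "({..<N}\<times>{..<N})\<times>{..<2::nat}"
  have freq: "0 \<le> freq p \<and> freq p \<le> 1" for p
    by (simp add: freq_def)
  have u: "0 \<le> \<bar>freq (fst k) * x\<bar> \<and> \<bar>freq (fst k) * x\<bar> \<le> 1" for k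
    using freq[of "fst k"] x by (simp add: abs_mult mult_le_one)
  have "1/2 \<le> 1 - (\<Sum>k\<in>?I. \<bar>freq (fst k)\<bar>)" using sum_freq_le[of N] by simp
  also have "\<dots> \<le> 1 - (\<Sum>k\<in>?I. \<bar>freq (fst k) * x\<bar>)"
    using x by (simp add: sum_mono abs_mult mult_left_le)
  also have "\<dots> \<le> (\<Prod>k\<in>?I. 1 - \<bar>freq (fst k) * x\<bar>)"
    by (rule one_minus_sum_le_prod) (use u in auto)
  also have "\<dots> \<le> (\<Prod>k\<in>?I. cos (freq (fst k) * x))"
    using u by (intro prod_mono) (auto intro!: cos_ge_1_minus_abs)
  also have "\<dots> = psi_trunc N x" by (simp add: psi_trunc_eq_cos_prod)
  finally show ?thesis .
qed

lemma psi_ge_half: "\<bar>x\<bar> \<le> 1 \<Longrightarrow> 1/2 \<le> psi x"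
  using psi_trunc_tendsto[of x] psi_trunc_ge_half by (intro LIMSEQ_le_const) auto

lemma psi_trunc_le_half_angle_cos_prod:
  assumes "J \<le> N"
  shows "psi_trunc N x \<le> (\<Prod>j<J. half_angle_cos_prod N (x / 2^(j+3)) ^ 2)"
proof -
  have "psi_trunc N x \<le> (\<Prod>p\<in>{..<J}\<times>{..<N}. cos (freq p * x) ^ 2)"
    unfolding psi_trunc_def using assms by (intro prod_le_prod_subset) (auto simp: abs_square_le_1)
  also have "\<dots> = (\<Prod>j<J. \<Prod>i<N. cos (freq (j,i) * x) ^ 2)"
    by (subst prod.cartesian_product) (simp add: case_prod_unfold)
  also have "\<dots> = (\<Prod>j<J. half_angle_cos_prod N (x / 2^(j+3)) ^ 2)"
  proof -
    have "freq (j,i) * x = x / 2^(j+3) / 2^(i+1)" for j i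
      by (simp add: freq_def power_add field_simps)
    then show ?thesis
      by (simp add: half_angle_cos_prod_def prod_power_distrib)
  qed
  finally show ?thesis .
qed

lemma psi_decay:
  assumes "x \<noteq> 0"
  shows "(x^2)^J * psi x \<le> (\<Prod>j<J. (2 * 2^(j+3))^2)"
proof -
  define N where "N = J + nat \<lceil>\<bar>x\<bar>\<rceil>"
  have "\<bar>x\<bar> \<le> real N" unfolding N_def by linarith
  also have "real n \<le> 2^n" for n
  proof (induction n)
    case (Suc n)
    have "1 \<le> (2::real)^n" by simp
    then show ?case using Suc.IH by (simp only: of_nat_Suc power_Suc)
  qed simp
  finally have x_le: "\<bar>x\<bar> \<le> 2^N" .
  have factor_le: "half_angle_cos_prod N (x / 2^(j+3)) ^ 2 \<le> (2 * 2^(j+3))^2 / x^2" for j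
  proof -
    let ?y = "x / 2^(j+3)"
    have "\<bar>?y\<bar> \<le> \<bar>x\<bar>" by (simp add: abs_divide divide_le_eq mult_le_cancel_left1)
    then have "\<bar>half_angle_cos_prod N ?y\<bar> \<le> 2 / \<bar>?y\<bar>"
      using assms x_le by (intro abs_half_angle_cos_prod_le) auto
    then have "\<bar>half_angle_cos_prod N ?y\<bar> ^ 2 \<le> (2 / \<bar>?y\<bar>) ^ 2"
      by (intro power_mono) auto
    also have "(2 / \<bar>?y\<bar>) ^ 2 = (2 * 2^(j+3))^2 / x^2"
      by (simp add: abs_divide power_divide field_simps)
    finally show ?thesis by simp
  qed
  have "psi x \<le> (\<Prod>j<J. half_angle_cos_prod N (x / 2^(j+3)) ^ 2)"
    using psi_le_psi_trunc[of x N] psi_trunc_le_half_angle_cos_prod[of J N x] by (simp add: N_def)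
  also have "\<dots> \<le> (\<Prod>j<J. (2 * 2^(j+3))^2 / x^2)"
    using factor_le by (intro prod_mono) auto
  also have "\<dots> = (\<Prod>j<J. (2 * 2^(j+3))^2) / (x^2)^J"
    by (simp add: prod_dividef)
  finally show ?thesis using assms by (simp add: field_simps)
qed

lemma psi_poly_decay: "\<exists>K. \<forall>x. (1 + x^2)^m * psi x \<le> K"
proof -
  define K :: real where "K = (\<Prod>j<m. (2 * 2^(j+3))^2)"
  have K: "0 \<le> K" unfolding K_def by (intro prod_nonneg) simp
  have "(1 + x^2)^m * psi x \<le> 2^m * (1 + K)" for x
  proof (cases "\<bar>x\<bar> \<le> 1")
    case True
    then have "(1 + x^2)^m \<le> 2^m" by (intro power_mono) (auto simp: abs_square_le_1)
    then have "(1 + x^2)^m * psi x \<le> 2^m * 1"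
      using psi_le_1[of x] psi_nonneg[of x] by (intro mult_mono) auto
    also have "\<dots> \<le> 2^m * (1 + K)" using K by simp
    finally show ?thesis .
  next
    case False
    then have "1 + x^2 \<le> 2 * x^2" using abs_square_le_1[of x] by linarith
    then have "(1 + x^2)^m \<le> 2^m * (x^2)^m"
      using power_mono[of "1 + x^2" "2 * x^2" m] by (simp add: power_mult_distrib)
    then have "(1 + x^2)^m * psi x \<le> 2^m * ((x^2)^m * psi x)"
      using psi_nonneg[of x] by (metis mult.assoc mult_right_mono)
    also have "\<dots> \<le> 2^m * K"
      using False psi_decay[of x m] by (simp add: K_def)
    also have "\<dots> \<le> 2^m * (1 + K)" by simp
    finally show ?thesis .
  qed
  then show ?thesis by blast
qed

lemma integrable_inverse_1_plus_square_lborel: "integrable lborel (\<lambda>x::real. inverse (1 + x^2))"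
proof -
  have "einterval (-\<infinity>) \<infinity> = (UNIV::real set)" by (auto simp: einterval_def)
  with integrable_inverse_1_plus_square show ?thesis
    by (simp add: set_integrable_def)
qed

lemma integrable_psi_mult:
  assumes [measurable]: "g \<in> borel_measurable borel" and g_le: "\<And>x. \<bar>g x\<bar> \<le> C * (1 + \<bar>x\<bar>)^n"
  shows "integrable lborel (\<lambda>x. psi x * g x)"
proof -
  obtain K where K: "\<And>x. (1 + x^2)^(n+1) * psi x \<le> K" using psi_poly_decay by blast
  have C: "0 \<le> C" using g_le[of 0] abs_ge_zero[of "g 0"] by simp
  show ?thesis
  proof (rule Bochner_Integration.integrable_bound)
    show "integrable lborel (\<lambda>x. C * 2^n * K * inverse (1 + x^2))"
      using integrable_inverse_1_plus_square_lborel by (intro integrable_mult_right)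
    show "AE x in lborel. norm (psi x * g x) \<le> norm (C * 2^n * K * inverse (1 + x^2))"
    proof (rule AE_I2)
      fix x :: real
      have "1 + \<bar>x\<bar> \<le> 2 * (1 + x^2)"
      proof (cases "\<bar>x\<bar> \<le> 1")
        case False
        then have "\<bar>x\<bar> * 1 \<le> \<bar>x\<bar> * \<bar>x\<bar>" by (intro mult_left_mono) auto
        then show ?thesis by (simp add: power2_eq_square)
      qed (simp add: add_increasing2)
      then have "(1 + \<bar>x\<bar>)^n \<le> (2 * (1 + x^2))^n" by (intro power_mono) auto
      then have poly_le: "(1 + \<bar>x\<bar>)^n \<le> 2^n * (1 + x^2)^n" by (simp only: power_mult_distrib)
      have decay: "(1 + x^2)^n * psi x \<le> K * inverse (1 + x^2)"
        using K[of x] by (simp add: field_simps add_pos_nonneg)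
      have "norm (psi x * g x) \<le> C * ((1 + \<bar>x\<bar>)^n * psi x)"
        using mult_left_mono[OF g_le[of x] psi_nonneg[of x]] psi_nonneg[of x] by (simp add: abs_mult ac_simps)
      also have "\<dots> \<le> C * (2^n * (1 + x^2)^n * psi x)"
        using poly_le psi_nonneg[of x] C by (intro mult_left_mono mult_right_mono) auto
      also have "\<dots> \<le> C * 2^n * (K * inverse (1 + x^2))"
        using mult_left_mono[OF decay, of "C * 2^n"] C by (simp add: mult.assoc)
      finally show "norm (psi x * g x) \<le> norm (C * 2^n * K * inverse (1 + x^2))"
        by (simp add: mult.assoc)
    qed
  qed simp
qed

lemma integrable_psi: "integrable lborel psi"
  using integrable_psi_mult[of "\<lambda>_. 1" 1 0] by simp

lemma norm_damped_fourier_psi_le: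
  assumes e: "e > 0" and w: "1/2 \<le> \<bar>w\<bar>"
  shows "norm (damped_fourier e psi w) \<le> gaussian_hat e (\<bar>w\<bar> - 1/2)"
proof -
  have "(\<lambda>N. damped_fourier e (psi_trunc N) w) \<longlonglongrightarrow> damped_fourier e psi w"
    unfolding damped_fourier_def
  proof (rule integral_dominated_convergence[where w="\<lambda>x. exp (- e * x^2)"])
    show "(\<lambda>x. (psi_trunc N x * exp (- e * x^2)) *\<^sub>R iexp (w * x)) \<in> borel_measurable lborel" for N
      unfolding psi_trunc_def by measurable
    show "AE x in lborel. (\<lambda>N. (psi_trunc N x * exp (- e * x^2)) *\<^sub>R iexp (w * x))
        \<longlonglongrightarrow> (psi x * exp (- e * x^2)) *\<^sub>R iexp (w * x)"
      by (intro AE_I2 tendsto_intros psi_trunc_tendsto)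
    show "AE x in lborel. norm ((psi_trunc N x * exp (- e * x^2)) *\<^sub>R iexp (w * x)) \<le> exp (- e * x^2)" for N
      using psi_trunc_nonneg psi_trunc_le_1
      by (intro AE_I2) (simp add: norm_exp_i_times abs_mult mult_left_le_one_le)
  qed (use integrable_exp_neg_square[OF e] in auto)
  moreover have "norm (damped_fourier e (psi_trunc N) w) \<le> gaussian_hat e (\<bar>w\<bar> - 1/2)" for N
  proof -
    let ?I = "({..<N}\<times>{..<N})\<times>{..<2::nat}"
    have "norm (damped_fourier e (psi_trunc N) w) \<le> gaussian_hat e (\<bar>w\<bar> - (\<Sum>k\<in>?I. \<bar>freq (fst k)\<bar>))"
      unfolding psi_trunc_eq_cos_prod[abs_def] using sum_freq_le[of N] w
      by (intro norm_damped_fourier_cos_prod_le[OF e]) auto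
    also have "\<dots> \<le> gaussian_hat e (\<bar>w\<bar> - 1/2)"
      using sum_freq_le[of N] w by (intro gaussian_hat_antimono[OF e]) auto
    finally show ?thesis .
  qed
  ultimately show ?thesis
    by (intro LIMSEQ_le_const2[OF tendsto_norm]) auto
qed

lemma fourier_psi_eq_0:
  assumes w: "1/2 < \<bar>w\<bar>"
  shows "(CLINT x|lborel. psi x *\<^sub>R iexp (w * x)) = 0"
proof -
  let ?e = "\<lambda>m. 1 / real (Suc m)"
  have "(\<lambda>m. damped_fourier (?e m) psi w) \<longlonglongrightarrow> (CLINT x|lborel. psi x *\<^sub>R iexp (w * x))"
    unfolding damped_fourier_def
  proof (rule integral_dominated_convergence[where w=psi])
    show "AE x in lborel. (\<lambda>m. (psi x * exp (- ?e m * x^2)) *\<^sub>R iexp (w * x)) \<longlonglongrightarrow> psi x *\<^sub>R iexp (w * x)"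
    proof (rule AE_I2)
      fix x
      have "(\<lambda>m. (psi x * exp (- ?e m * x^2)) *\<^sub>R iexp (w * x)) \<longlonglongrightarrow> (psi x * exp (- 0 * x^2)) *\<^sub>R iexp (w * x)"
        using LIMSEQ_inverse_real_of_nat by (intro tendsto_intros) (simp add: inverse_eq_divide)
      then show "(\<lambda>m. (psi x * exp (- ?e m * x^2)) *\<^sub>R iexp (w * x)) \<longlonglongrightarrow> psi x *\<^sub>R iexp (w * x)"
        by simp
    qed
    show "AE x in lborel. norm ((psi x * exp (- ?e m * x^2)) *\<^sub>R iexp (w * x)) \<le> psi x" for m
      using psi_nonneg by (intro AE_I2) (simp add: norm_exp_i_times abs_mult mult_left_le)
  qed (simp_all add: integrable_psi)
  moreover have "\<forall>\<^sub>F m in sequentially. norm (damped_fourier (?e m) psi w) \<le> gaussian_hat (?e m) (\<bar>w\<bar> - 1/2)"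
    using w by (intro always_eventually allI norm_damped_fourier_psi_le) auto
  ultimately have "norm (CLINT x|lborel. psi x *\<^sub>R iexp (w * x)) \<le> 0"
    using w by (intro tendsto_le[OF _ gaussian_hat_tendsto_0 tendsto_norm]) auto
  then show ?thesis by simp
qed

lemma integral_psi_ge_1: "1 \<le> (\<integral>x. psi x \<partial>lborel)"
proof -
  have "(\<integral>x. (1/2::real) * indicator {-1..1::real} x \<partial>lborel) = 1"
    using content_real[of "-1::real" 1] by simp
  moreover have "(\<integral>x. (1/2::real) * indicator {-1..1::real} x \<partial>lborel) \<le> (\<integral>x. psi x \<partial>lborel)"
    using psi_ge_half psi_nonneg
    by (intro integral_mono integrable_psi integrable_mult_right integrable_real_indicator)
       (auto simp: indicator_def abs_le_iff)
  ultimately show ?thesis by simp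
qed

lemma integral_psi_mult_abs_pos: "0 < (\<integral>x. psi x * \<bar>x\<bar> \<partial>lborel)"
proof -
  have "(\<integral>x. (1/4::real) * indicator {1/2..1::real} x \<partial>lborel) = 1/8" by simp
  moreover have "(\<integral>x. (1/4::real) * indicator {1/2..1::real} x \<partial>lborel) \<le> (\<integral>x. psi x * \<bar>x\<bar> \<partial>lborel)"
  proof (rule integral_mono)
    show "integrable lborel (\<lambda>x. psi x * \<bar>x\<bar>)"
      by (rule integrable_psi_mult[where C=1 and n=1]) auto
    show "(1/4::real) * indicator {1/2..1} x \<le> psi x * \<bar>x\<bar>" for x
    proof (cases "x \<in> {1/2..1}")
      case True
      then have "1/2 * (1/2) \<le> psi x * \<bar>x\<bar>" using psi_ge_half[of x] by (intro mult_mono) auto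
      then show ?thesis using True by simp
    qed (use psi_nonneg[of x] in simp)
  qed (auto intro: integrable_real_indicator simp: less_top[symmetric])
  ultimately show ?thesis by simp
qed

section \<open>The bump density and its rescalings\<close>

definition bump :: "real \<Rightarrow> real" where
  "bump x = psi x / (\<integral>y. psi y \<partial>lborel)"

lemma bump_nonneg: "0 \<le> bump x"
  using psi_nonneg integral_psi_ge_1 by (simp add: bump_def)

lemma borel_measurable_bump [measurable]: "bump \<in> borel_measurable borel"
  unfolding bump_def by measurable

lemma nn_integral_bump: "(\<integral>\<^sup>+x. ennreal (bump x) \<partial>lborel) = 1"
  using integral_psi_ge_1 integrable_psi bump_nonneg
  by (subst nn_integral_eq_integral) (auto simp: bump_def[abs_def])

lemma integrable_density_bump:
  assumes [measurable]: "g \<in> borel_measurable borel" and "\<And>x. \<bar>g x\<bar> \<le> C * (1 + \<bar>x\<bar>)^n"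
  shows "integrable (density lborel bump) g"
  using integrable_psi_mult[OF assms] bump_nonneg
  by (subst integrable_density) (auto simp: bump_def)

lemma char_bump_eq_0:
  assumes "1/2 < \<bar>w\<bar>"
  shows "char (density lborel bump) w = 0"
proof -
  have "char (density lborel bump) w = (CLINT x|lborel. bump x *\<^sub>R iexp (w * x))"
    unfolding char_def using bump_nonneg by (subst integral_density) auto
  also have "\<dots> = (CLINT x|lborel. (1 / (\<integral>y. psi y \<partial>lborel)) *\<^sub>R (psi x *\<^sub>R iexp (w * x)))"
    by (simp add: bump_def)
  also have "\<dots> = 0"
    unfolding integral_scaleR_right fourier_psi_eq_0[OF assms] by simp
  finally show ?thesis .
qed

lemma integral_abs_bump_pos: "0 < (\<integral>x. \<bar>x\<bar> \<partial>density lborel bump)"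
  using integral_psi_mult_abs_pos integral_psi_ge_1 bump_nonneg
  by (subst integral_density) (auto simp: bump_def)

lemma
  fixes g :: "real \<Rightarrow> real" and h :: "real \<Rightarrow> 'a::{banach, second_countable_topology}"
  assumes c: "c > 0" and [measurable]: "g \<in> borel_measurable borel" "h \<in> borel_measurable borel"
    and g: "\<And>x. 0 \<le> g x"
  shows integrable_density_rescale:
      "integrable (density lborel (\<lambda>x. c * g (c * x))) h \<longleftrightarrow> integrable (density lborel g) (\<lambda>y. h (y / c))"
    and integral_density_rescale:
      "(\<integral>x. h x \<partial>density lborel (\<lambda>x. c * g (c * x))) = (\<integral>y. h (y / c) \<partial>density lborel g)"
proof -
  have scaled: "(\<lambda>x. (c * g (c * x)) *\<^sub>R h x) = (\<lambda>x. c *\<^sub>R (g (0 + c * x) *\<^sub>R h ((0 + c * x) / c)))"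
    using c by auto
  have scaleR_iff: "integrable lborel (\<lambda>x. c *\<^sub>R F x) \<longleftrightarrow> integrable lborel F" for F :: "real \<Rightarrow> 'a"
    using c integrable_scaleR_right[of "1 / c" lborel "\<lambda>x. c *\<^sub>R F x"] by auto
  have "integrable (density lborel (\<lambda>x. c * g (c * x))) h
      \<longleftrightarrow> integrable lborel (\<lambda>x. (c * g (c * x)) *\<^sub>R h x)"
    using c g by (subst integrable_density) auto
  also have "\<dots> \<longleftrightarrow> integrable lborel (\<lambda>x. g (0 + c * x) *\<^sub>R h ((0 + c * x) / c))"
    unfolding scaled scaleR_iff ..
  also have "\<dots> \<longleftrightarrow> integrable (density lborel g) (\<lambda>y. h (y / c))"
    using c g lborel_integrable_real_affine_iff[of c "\<lambda>y. g y *\<^sub>R h (y / c)" 0]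
    by (subst integrable_density) auto
  finally show "integrable (density lborel (\<lambda>x. c * g (c * x))) h \<longleftrightarrow> integrable (density lborel g) (\<lambda>y. h (y / c))" .
  have "(\<integral>x. h x \<partial>density lborel (\<lambda>x. c * g (c * x))) = (\<integral>x. (c * g (c * x)) *\<^sub>R h x \<partial>lborel)"
    using c g by (subst integral_density) auto
  also have "\<dots> = c *\<^sub>R (\<integral>x. g (0 + c * x) *\<^sub>R h ((0 + c * x) / c) \<partial>lborel)"
    unfolding scaled integral_scaleR_right ..
  also have "\<dots> = (\<integral>y. h (y / c) \<partial>density lborel g)"
    using c g lborel_integral_real_affine[of c "\<lambda>y. g y *\<^sub>R h (y / c)" 0]
    by (simp add: integral_density del: add_0)
  finally show "(\<integral>x. h x \<partial>density lborel (\<lambda>x. c * g (c * x))) = (\<integral>y. h (y / c) \<partial>density lborel g)" .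
qed

lemma nn_integral_rescale:
  fixes g :: "real \<Rightarrow> real"
  assumes c: "c > 0" and [measurable]: "g \<in> borel_measurable borel" and g: "\<And>x. 0 \<le> g x"
  shows "(\<integral>\<^sup>+x. ennreal (c * g (c * x)) \<partial>lborel) = (\<integral>\<^sup>+x. ennreal (g x) \<partial>lborel)"
  using c g nn_integral_real_affine[of "\<lambda>x. ennreal (g x)" c 0]
  by (simp add: ennreal_mult nn_integral_cmult)

lemma char_density_rescale:
  fixes g :: "real \<Rightarrow> real"
  assumes "c > 0" "g \<in> borel_measurable borel" "\<And>x. 0 \<le> g x"
  shows "char (density lborel (\<lambda>x. c * g (c * x))) w = char (density lborel g) (w / c)"
  unfolding char_def using assms by (simp add: integral_density_rescale)

lemma integrable_density_rescale_bump:
  assumes c: "c > 0" and [measurable]: "g \<in> borel_measurable borel"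
    and g_le: "\<And>x. \<bar>g x\<bar> \<le> C * (1 + \<bar>x\<bar>)^n"
  shows "integrable (density lborel (\<lambda>x. c * bump (c * x))) g"
proof -
  have "\<bar>g (y / c)\<bar> \<le> (C * (1 + 1 / c)^n) * (1 + \<bar>y\<bar>)^n" for y
  proof -
    have C: "0 \<le> C" using g_le[of 0] abs_ge_zero[of "g 0"] by simp
    have "1 + \<bar>y / c\<bar> \<le> (1 + 1 / c) * (1 + \<bar>y\<bar>)"
      using c by (simp add: abs_divide field_simps)
    then have "(1 + \<bar>y / c\<bar>)^n \<le> (1 + 1 / c)^n * (1 + \<bar>y\<bar>)^n"
      by (metis power_mono power_mult_distrib abs_ge_zero add_nonneg_nonneg zero_le_one)
    then show ?thesis
      using g_le[of "y / c"] C by (metis mult.assoc mult_left_mono order_trans)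
  qed
  then have "integrable (density lborel bump) (\<lambda>y. g (y / c))"
    by (intro integrable_density_bump) auto
  then show ?thesis
    using c bump_nonneg by (subst integrable_density_rescale) auto
qed

lemma rescaled_bump_density:
  fixes \<Delta> :: real
  assumes \<Delta>: "\<Delta> > 0"
  shows "\<exists>f. f \<in> borel_measurable borel \<and> (\<forall>x. 0 \<le> f x) \<and> (\<integral>\<^sup>+x. ennreal (f x) \<partial>lborel) = 1 \<and>
    (let M = density lborel f in
       integrable M abs \<and>
       (\<integral>x. \<bar>x\<bar> \<partial>density lborel bump) / \<Delta> \<le> (\<integral>x. \<bar>x\<bar> \<partial>M) \<and>
       (\<integral>x. \<bar>x\<bar> \<partial>M) \<le> (\<integral>x. \<bar>x\<bar> \<partial>density lborel bump) / \<Delta> \<and>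
       (\<forall>\<omega>. \<bar>\<omega>\<bar> \<ge> \<Delta> \<longrightarrow> char M \<omega> = 0) \<and>
       (\<forall>n. integrable M (\<lambda>x. (x - (\<integral>y. y \<partial>M)) ^ n)))"
proof -
  define M where "M = density lborel (\<lambda>x. \<Delta> * bump (\<Delta> * x))"
  have "(\<integral>\<^sup>+x. ennreal (\<Delta> * bump (\<Delta> * x)) \<partial>lborel) = 1"
    using nn_integral_rescale[OF \<Delta> borel_measurable_bump] bump_nonneg nn_integral_bump by simp
  moreover have "integrable M abs"
    unfolding M_def by (rule integrable_density_rescale_bump[OF \<Delta>, where C=1 and n=1]) auto
  moreover have "(\<integral>x. \<bar>x\<bar> \<partial>M) = (\<integral>x. \<bar>x\<bar> \<partial>density lborel bump) / \<Delta>"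
    unfolding M_def using \<Delta> bump_nonneg by (simp add: integral_density_rescale abs_divide)
  moreover have "char M \<omega> = 0" if "\<Delta> \<le> \<bar>\<omega>\<bar>" for \<omega>
    unfolding M_def using \<Delta> that bump_nonneg
    by (simp add: char_density_rescale char_bump_eq_0 abs_divide le_divide_eq_1)
  moreover have "integrable M (\<lambda>x. (x - a) ^ n)" for a n
  proof -
    have "\<bar>(x - a) ^ n\<bar> \<le> (1 + \<bar>a\<bar>) ^ n * (1 + \<bar>x\<bar>) ^ n" for x
    proof -
      have "\<bar>x - a\<bar> \<le> \<bar>x\<bar> + \<bar>a\<bar>" by (rule abs_triangle_ineq4)
      moreover have "0 \<le> \<bar>a\<bar> * \<bar>x\<bar>" by simp
      ultimately have "\<bar>x - a\<bar> \<le> (1 + \<bar>a\<bar>) * (1 + \<bar>x\<bar>)"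
        unfolding distrib_left distrib_right by linarith
      then show ?thesis
        by (simp add: power_abs flip: power_mult_distrib) (intro power_mono, auto)
    qed
    then show ?thesis
      unfolding M_def by (intro integrable_density_rescale_bump[OF \<Delta>]) auto
  qed
  ultimately show ?thesis
    using \<Delta> bump_nonneg unfolding M_def Let_def
    by (intro exI[of _ "\<lambda>x. \<Delta> * bump (\<Delta> * x)"]) auto
qed

theorem lemma3:
  shows "\<exists>c1 c2 :: real. 0 < c1 \<and> c1 \<le> c2 \<and>
    (\<forall>\<Delta>::real. \<Delta> > 0 \<longrightarrow>
      (\<exists>f :: real \<Rightarrow> real.
         f \<in> borel_measurable borel \<and> (\<forall>x. 0 \<le> f x) \<and>
         (\<integral>\<^sup>+ x. ennreal (f x) \<partial>lborel) = 1 \<and>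
         (let M = density lborel f in
            integrable M (\<lambda>x. \<bar>x\<bar>) \<and>
            c1 / \<Delta> \<le> (\<integral>x. \<bar>x\<bar> \<partial>M) \<and>
            (\<integral>x. \<bar>x\<bar> \<partial>M) \<le> c2 / \<Delta> \<and>
            (\<forall>\<omega>::real. \<bar>\<omega>\<bar> \<ge> \<Delta> \<longrightarrow> char M \<omega> = 0) \<and>
            (\<forall>n::nat. integrable M (\<lambda>x. (x - (\<integral>y. y \<partial>M)) ^ n)))))"
  using integral_abs_bump_pos rescaled_bump_density
  by (intro exI[of _ "\<integral>x. \<bar>x\<bar> \<partial>density lborel bump"] conjI allI impI order_refl)

end
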